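(* Let $Q_t$ and $Q'_t$ be two instances of the Data Collection process with the same graph, sink, sources, rate vector $\bm{J}$ and parameter $\beta$, with initial states satisfying $Q_0\preceq Q'_0$. Then for every $t\ge0$, $Q_t$ is stochastically dominated by $Q'_t$; in particular $\Pr[Q_t(v)>0]\le\Pr[Q'_t(v)>0]$ for all $v\in V\setminus\{u_s\}$.
   Context: Partial order on $(\mathbb{N}\cup\{0\})^{V\setminus\{u_s\}}$: $\bm{x}\preceq\bm{y}$ iff $\bm{x}_v\le\bm{y}_v$ for all $v$. A function $f$ on this set is increasing if $\bm{x}\preceq\bm{y}$ implies $f(\bm{x})\le f(\bm{y})$. A random vector $X$ is stochastically dominated by $Y$ if $\mathbb{E}[f(X)]\le\mathbb{E}[f(Y)]$ for every increasing $f$. Data Collection process: on a connected undirected graph $G=(V,E,w)$ with positive weights and $d_u=\sum_{v:(u,v)\in E}w_{uv}$, fix a sink $u_s\in V$ and a set of sources $V_s\subseteq V\setminus\{u_s\}$, with relative rate vector $\bm{J}$ ($\bm{J}_v>0$ for $v\in V_s$, $0$ for other $v\ne u_s$, $\bm{J}_{u_s}=-\sum_{v\ne u_s}\bm{J}_v$) and $\beta>0$ with $\beta\bm{J}_v\le1$. The process is the discrete-time Markov chain $\{Q_t\}$ on $(\mathbb{N}\cup\{0\})^{V\setminus\{u_s\}}$ ($Q_t(v)$ = queue size at $v$) where at each step each $v\in V_s$ independently generates a new packet with probability $\beta\bm{J}_v$ into its queue, and each $u\ne u_s$ with nonempty queue picks one packet and a neighbor $v$ with probability $w_{uv}/d_u$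 and transmits the packet to $v$ (added to $v$'s queue if $v\ne u_s$, removed from the system if $v=u_s$). *)

theory Defs
  imports "HOL-Probability.Probability"
begin

definition wdeg :: "'a set \<Rightarrow> ('a \<Rightarrow> 'a \<Rightarrow> real) \<Rightarrow> 'a \<Rightarrow> real" where
  "wdeg V w u = (\<Sum>v\<in>V. w u v)"

definition wedges :: "'a set \<Rightarrow> ('a \<Rightarrow> 'a \<Rightarrow> real) \<Rightarrow> ('a \<times> 'a) set" where
  "wedges V w = {(x, y). x \<in> V \<and> y \<in> V \<and> w x y > 0}"

definition wgraph_connected :: "'a set \<Rightarrow> ('a \<Rightarrow> 'a \<Rightarrow> real) \<Rightarrow> bool" where
  "wgraph_connected V w \<longleftrightarrow> (\<forall>u\<in>V. \<forall>v\<in>V. (u, v) \<in> (wedges V w)\<^sup>*)"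

definition nbr_pmf :: "'a set \<Rightarrow> ('a \<Rightarrow> 'a \<Rightarrow> real) \<Rightarrow> 'a \<Rightarrow> 'a pmf" where
  "nbr_pmf V w u = embed_pmf (\<lambda>v. if v \<in> V then w u v / wdeg V w u else 0)"

definition dc_states :: "'a set \<Rightarrow> 'a \<Rightarrow> ('a \<Rightarrow> nat) set" where
  "dc_states V s = {Q. \<forall>v. v \<notin> V - {s} \<longrightarrow> Q v = 0}"

definition dc_le :: "'a set \<Rightarrow> 'a \<Rightarrow> ('a \<Rightarrow> nat) \<Rightarrow> ('a \<Rightarrow> nat) \<Rightarrow> bool" where
  "dc_le V s x y \<longleftrightarrow> (\<forall>v\<in>V - {s}. x v \<le> y v)"

definition dc_increasing :: "'a set \<Rightarrow> 'a \<Rightarrow> (('a \<Rightarrow> nat) \<Rightarrow> real) \<Rightarrow> bool" where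
  "dc_increasing V s f \<longleftrightarrow>
     (\<forall>x\<in>dc_states V s. \<forall>y\<in>dc_states V s. dc_le V s x y \<longrightarrow> f x \<le> f y)"

text \<open>One step of the Data Collection chain. A v: arrival at v (prob beta * J v);
  T u: Some v if u (nonempty queue) transmits to v, None if u's queue is empty.\<close>
definition dc_step :: "'a set \<Rightarrow> ('a \<Rightarrow> 'a \<Rightarrow> real) \<Rightarrow> 'a \<Rightarrow> ('a \<Rightarrow> real) \<Rightarrow> real
                       \<Rightarrow> ('a \<Rightarrow> nat) \<Rightarrow> ('a \<Rightarrow> nat) pmf" where
  "dc_step V w s J \<beta> Q =
     do {
       A \<leftarrow> Pi_pmf (V - {s}) False (\<lambda>v. bernoulli_pmf (\<beta> * J v));
       T \<leftarrow> Pi_pmf (V - {s}) None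
              (\<lambda>u. if Q u > 0 then map_pmf Some (nbr_pmf V w u) else return_pmf None);
       return_pmf (\<lambda>v. if v \<in> V - {s} then
                          Q v + (if A v then 1 else 0) - (if Q v > 0 then 1 else 0)
                            + card {u \<in> V - {s}. T u = Some v}
                        else 0)
     }"

fun dc_dist :: "'a set \<Rightarrow> ('a \<Rightarrow> 'a \<Rightarrow> real) \<Rightarrow> 'a \<Rightarrow> ('a \<Rightarrow> real) \<Rightarrow> real
                 \<Rightarrow> ('a \<Rightarrow> nat) \<Rightarrow> nat \<Rightarrow> ('a \<Rightarrow> nat) pmf" where
  "dc_dist V w s J \<beta> Q0 0 = return_pmf Q0"
| "dc_dist V w s J \<beta> Q0 (Suc t) = bind_pmf (dc_dist V w s J \<beta> Q0 t) (dc_step V w s J \<beta>)"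

definition stoch_dom :: "'a set \<Rightarrow> 'a \<Rightarrow> ('a \<Rightarrow> nat) pmf \<Rightarrow> ('a \<Rightarrow> nat) pmf \<Rightarrow> bool" where
  "stoch_dom V s X Y \<longleftrightarrow>
     (\<forall>f. dc_increasing V s f \<longrightarrow>
          measure_pmf.expectation X f \<le> measure_pmf.expectation Y f)"

end

theory Submission
  imports Defs
begin

text \<open>Run both chains on the same arrivals and the same neighbour choices, each node
  forwarding along its choice only while its own queue is nonempty. If \<open>Q \<preceq> Q'\<close>, every node
  that sends in the first chain also sends, to the same neighbour, in the second; together with
  monotonicity of \<open>x \<mapsto> x - [x > 0]\<close> this keeps the coupled pair ordered forever. Integrating an
  increasing function against the coupling gives the dominance, and the indicator of
  \<open>Q v > 0\<close> is such a function.\<close>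

lemma Pi_pmf_map_pointwise:
  assumes "finite A" and "\<And>x. x \<notin> A \<Longrightarrow> f x dflt = dflt'"
  shows "Pi_pmf A dflt' (\<lambda>x. map_pmf (f x) (g x)) = map_pmf (\<lambda>h x. f x (h x)) (Pi_pmf A dflt g)"
proof -
  have "Pi_pmf A dflt' (\<lambda>x. map_pmf (f x) (g x))
      = Pi_pmf A dflt g \<bind> (\<lambda>h. Pi_pmf A dflt' (\<lambda>x. return_pmf (f x (h x))))"
    unfolding map_pmf_def
    by (rule Pi_pmf_bind[OF assms(1), where p = g and q = "\<lambda>x y. return_pmf (f x y)" and d' = dflt])
  also have "\<dots> = Pi_pmf A dflt g \<bind> (\<lambda>h. return_pmf (\<lambda>x. f x (h x)))"
  proof (intro bind_pmf_cong refl)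
    fix h assume "h \<in> set_pmf (Pi_pmf A dflt g)"
    then have "h x = dflt" if "x \<notin> A" for x
      using set_Pi_pmf_subset[OF assms(1), of dflt g] that by auto
    then have "(\<lambda>x. if x \<in> A then f x (h x) else dflt') = (\<lambda>x. f x (h x))"
      using assms(2) by (simp add: fun_eq_iff)
    then show "Pi_pmf A dflt' (\<lambda>x. return_pmf (f x (h x))) = return_pmf (\<lambda>x. f x (h x))"
      using assms(1) by simp
  qed
  also have "\<dots> = map_pmf (\<lambda>h x. f x (h x)) (Pi_pmf A dflt g)"
    unfolding map_pmf_def ..
  finally show ?thesis .
qed

definition dc_arrivals :: "'a set \<Rightarrow> 'a \<Rightarrow> ('a \<Rightarrow> real) \<Rightarrow> real \<Rightarrow> ('a \<Rightarrow> bool) pmf" where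
  "dc_arrivals V s J \<beta> = Pi_pmf (V - {s}) False (\<lambda>v. bernoulli_pmf (\<beta> * J v))"

definition dc_routes :: "'a set \<Rightarrow> ('a \<Rightarrow> 'a \<Rightarrow> real) \<Rightarrow> 'a \<Rightarrow> ('a \<Rightarrow> 'a option) pmf" where
  "dc_routes V w s = Pi_pmf (V - {s}) None (\<lambda>u. map_pmf Some (nbr_pmf V w u))"

definition dc_update :: "'a set \<Rightarrow> 'a \<Rightarrow> ('a \<Rightarrow> nat) \<Rightarrow> ('a \<Rightarrow> bool) \<Rightarrow> ('a \<Rightarrow> 'a option)
                         \<Rightarrow> 'a \<Rightarrow> nat" where
  "dc_update V s Q A T = (\<lambda>v. if v \<in> V - {s} then
       Q v + (if A v then 1 else 0) - (if Q v > 0 then 1 else 0)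
         + card {u \<in> V - {s}. Q u > 0 \<and> T u = Some v}
     else 0)"

lemma dc_step_eq_update:
  assumes "finite V"
  shows "dc_step V w s J \<beta> Q =
           do {
             A \<leftarrow> dc_arrivals V s J \<beta>;
             T \<leftarrow> dc_routes V w s;
             return_pmf (dc_update V s Q A T)
           }"
proof -
  have "(\<lambda>u. if Q u > 0 then map_pmf Some (nbr_pmf V w u) else return_pmf None)
      = (\<lambda>u. map_pmf (\<lambda>y. if Q u > 0 then y else None) (map_pmf Some (nbr_pmf V w u)))"
    by auto
  then have "Pi_pmf (V - {s}) None
               (\<lambda>u. if Q u > 0 then map_pmf Some (nbr_pmf V w u) else return_pmf None)
           = map_pmf (\<lambda>T u. if Q u > 0 then T u else None) (dc_routes V w s)"
    unfolding dc_routes_def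
    by (simp only:) (rule Pi_pmf_map_pointwise[where f = "\<lambda>u y. if Q u > 0 then y else None"],
                     use assms in auto)
  moreover have "{u \<in> V - {s}. (if Q u > 0 then T u else None) = Some v}
               = {u \<in> V - {s}. Q u > 0 \<and> T u = Some v}" for T and v :: 'a
    by auto
  ultimately show ?thesis
    unfolding dc_step_def dc_arrivals_def dc_update_def by (simp only: bind_map_pmf comp_def)
qed

definition dc_coupled_step :: "'a set \<Rightarrow> ('a \<Rightarrow> 'a \<Rightarrow> real) \<Rightarrow> 'a \<Rightarrow> ('a \<Rightarrow> real) \<Rightarrow> real
                               \<Rightarrow> ('a \<Rightarrow> nat) \<times> ('a \<Rightarrow> nat) \<Rightarrow> (('a \<Rightarrow> nat) \<times> ('a \<Rightarrow> nat)) pmf" where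
  "dc_coupled_step V w s J \<beta> p =
     do {
       A \<leftarrow> dc_arrivals V s J \<beta>;
       T \<leftarrow> dc_routes V w s;
       return_pmf (dc_update V s (fst p) A T, dc_update V s (snd p) A T)
     }"

fun dc_coupled_dist :: "'a set \<Rightarrow> ('a \<Rightarrow> 'a \<Rightarrow> real) \<Rightarrow> 'a \<Rightarrow> ('a \<Rightarrow> real) \<Rightarrow> real
                        \<Rightarrow> ('a \<Rightarrow> nat) \<Rightarrow> ('a \<Rightarrow> nat) \<Rightarrow> nat \<Rightarrow> (('a \<Rightarrow> nat) \<times> ('a \<Rightarrow> nat)) pmf" where
  "dc_coupled_dist V w s J \<beta> Q0 Q0' 0 = return_pmf (Q0, Q0')"
| "dc_coupled_dist V w s J \<beta> Q0 Q0' (Suc t) =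
     bind_pmf (dc_coupled_dist V w s J \<beta> Q0 Q0' t) (dc_coupled_step V w s J \<beta>)"

lemma dc_coupled_step_marginals:
  assumes "finite V"
  shows "map_pmf fst (dc_coupled_step V w s J \<beta> p) = dc_step V w s J \<beta> (fst p)"
    and "map_pmf snd (dc_coupled_step V w s J \<beta> p) = dc_step V w s J \<beta> (snd p)"
  by (simp_all add: assms dc_coupled_step_def dc_step_eq_update map_bind_pmf)

lemma dc_coupled_dist_marginals:
  assumes "finite V"
  shows "map_pmf fst (dc_coupled_dist V w s J \<beta> Q0 Q0' t) = dc_dist V w s J \<beta> Q0 t"
    and "map_pmf snd (dc_coupled_dist V w s J \<beta> Q0 Q0' t) = dc_dist V w s J \<beta> Q0' t"
proof (induction t)
  case (Suc t)
  note IH = Suc[symmetric]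
  show "map_pmf fst (dc_coupled_dist V w s J \<beta> Q0 Q0' (Suc t)) = dc_dist V w s J \<beta> Q0 (Suc t)"
    by (simp add: map_bind_pmf dc_coupled_step_marginals[OF assms] IH(1) bind_map_pmf)
  show "map_pmf snd (dc_coupled_dist V w s J \<beta> Q0 Q0' (Suc t)) = dc_dist V w s J \<beta> Q0' (Suc t)"
    by (simp add: map_bind_pmf dc_coupled_step_marginals[OF assms] IH(2) bind_map_pmf)
qed simp_all

text \<open>Queues grow by at most \<open>1 + |V - {s}|\<close> per step; the bounds only serve to make the
  support of the coupling finite, so that all expectations are finite sums.\<close>

definition dc_bounded_states :: "'a set \<Rightarrow> 'a \<Rightarrow> nat \<Rightarrow> ('a \<Rightarrow> nat) set" where
  "dc_bounded_states V s B = {Q \<in> dc_states V s. \<forall>v. Q v \<le> B}"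

lemma finite_dc_bounded_states:
  assumes "finite V"
  shows "finite (dc_bounded_states V s B)"
proof -
  let ?extend = "\<lambda>g v. if v \<in> V - {s} then g v else 0"
  have "dc_bounded_states V s B \<subseteq> ?extend ` PiE (V - {s}) (\<lambda>_. {..B})"
  proof
    fix Q assume Q: "Q \<in> dc_bounded_states V s B"
    then have "Q = ?extend (restrict Q (V - {s}))"
      by (auto simp: dc_bounded_states_def dc_states_def fun_eq_iff)
    moreover have "restrict Q (V - {s}) \<in> PiE (V - {s}) (\<lambda>_. {..B})"
      using Q by (auto simp: dc_bounded_states_def)
    ultimately show "Q \<in> ?extend ` PiE (V - {s}) (\<lambda>_. {..B})"
      by blast
  qed
  moreover have "finite (PiE (V - {s}) (\<lambda>_. {..B}))"
    using assms by (intro finite_PiE) auto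
  ultimately show ?thesis
    using finite_subset by blast
qed

lemma dc_states_bounded:
  assumes "finite V" and "Q \<in> dc_states V s" and "sum Q V \<le> B"
  shows "Q \<in> dc_bounded_states V s B"
proof -
  have "Q v \<le> sum Q V" for v
    using assms(1,2) by (cases "v \<in> V") (auto intro: member_le_sum simp: dc_states_def)
  then show ?thesis
    using assms(2,3) by (auto simp: dc_bounded_states_def intro: order_trans)
qed

lemma dc_update_bounded:
  assumes "finite V" and "Q \<in> dc_bounded_states V s B"
  shows "dc_update V s Q A T \<in> dc_bounded_states V s (B + 1 + card (V - {s}))"
proof -
  have "dc_update V s Q A T v \<le> B + 1 + card (V - {s})" for v
  proof -
    have "card {u \<in> V - {s}. Q u > 0 \<and> T u = Some v} \<le> card (V - {s})"
      using assms(1) by (intro card_mono) auto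
    moreover have "Q v \<le> B"
      using assms(2) by (simp add: dc_bounded_states_def)
    ultimately show ?thesis
      unfolding dc_update_def by auto
  qed
  moreover have "dc_update V s Q A T \<in> dc_states V s"
    by (simp add: dc_states_def dc_update_def)
  ultimately show ?thesis
    by (simp add: dc_bounded_states_def)
qed

lemma dc_update_mono:
  assumes "finite V" and "dc_le V s Q Q'"
  shows "dc_le V s (dc_update V s Q A T) (dc_update V s Q' A T)"
  unfolding dc_le_def
proof
  fix v assume v: "v \<in> V - {s}"
  have "{u \<in> V - {s}. Q u > 0 \<and> T u = Some v} \<subseteq> {u \<in> V - {s}. Q' u > 0 \<and> T u = Some v}"
    using assms(2) by (auto simp: dc_le_def less_le_trans)
  then have "card {u \<in> V - {s}. Q u > 0 \<and> T u = Some v}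
           \<le> card {u \<in> V - {s}. Q' u > 0 \<and> T u = Some v}"
    using assms(1) by (intro card_mono) auto
  moreover have "Q v \<le> Q' v"
    using assms(2) v by (simp add: dc_le_def)
  ultimately show "dc_update V s Q A T v \<le> dc_update V s Q' A T v"
    using v by (auto simp: dc_update_def)
qed

lemma dc_coupled_dist_support:
  assumes "finite V"
    and "Q0 \<in> dc_bounded_states V s B" and "Q0' \<in> dc_bounded_states V s B"
    and "dc_le V s Q0 Q0'"
    and "p \<in> set_pmf (dc_coupled_dist V w s J \<beta> Q0 Q0' t)"
  shows "fst p \<in> dc_bounded_states V s (B + t * (1 + card (V - {s})))
       \<and> snd p \<in> dc_bounded_states V s (B + t * (1 + card (V - {s})))
       \<and> dc_le V s (fst p) (snd p)"
  using assms(5)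
proof (induction t arbitrary: p)
  case 0
  then show ?case
    using assms(2-4) by simp
next
  case (Suc t)
  then obtain q A T where q: "q \<in> set_pmf (dc_coupled_dist V w s J \<beta> Q0 Q0' t)"
    and p: "p = (dc_update V s (fst q) A T, dc_update V s (snd q) A T)"
    by (auto simp: dc_coupled_step_def)
  let ?b = "B + t * (1 + card (V - {s}))"
  have bound: "B + Suc t * (1 + card (V - {s})) = ?b + 1 + card (V - {s})"
    by simp
  have "fst q \<in> dc_bounded_states V s ?b" "snd q \<in> dc_bounded_states V s ?b"
    and "dc_le V s (fst q) (snd q)"
    using Suc.IH[OF q] by auto
  then show ?case
    unfolding p fst_conv snd_conv bound
    by (intro conjI dc_update_bounded[OF assms(1)] dc_update_mono[OF assms(1)])
qed

lemma stoch_dom_if_monotone_coupling: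
  assumes "finite (set_pmf C)"
    and "\<And>p. p \<in> set_pmf C \<Longrightarrow>
           fst p \<in> dc_states V s \<and> snd p \<in> dc_states V s \<and> dc_le V s (fst p) (snd p)"
  shows "stoch_dom V s (map_pmf fst C) (map_pmf snd C)"
  unfolding stoch_dom_def
proof (intro allI impI)
  fix f assume "dc_increasing V s f"
  then have "AE p in measure_pmf C. f (fst p) \<le> f (snd p)"
    using assms(2) by (intro AE_pmfI) (auto simp: dc_increasing_def)
  then have "measure_pmf.expectation C (\<lambda>p. f (fst p)) \<le> measure_pmf.expectation C (\<lambda>p. f (snd p))"
    using assms(1) by (intro integral_mono_AE integrable_measure_pmf_finite)
  then show "measure_pmf.expectation (map_pmf fst C) f \<le> measure_pmf.expectation (map_pmf snd C) f"
    by simp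
qed

lemma stoch_dom_prob_queue_nonempty:
  assumes "stoch_dom V s X Y" and "v \<in> V - {s}"
  shows "measure_pmf.prob X {Q. Q v > 0} \<le> measure_pmf.prob Y {Q. Q v > 0}"
proof -
  have "dc_increasing V s (indicator {Q. Q v > 0})"
    using assms(2) by (auto simp: dc_increasing_def dc_le_def indicator_def dest!: bspec[where x = v])
  then have "measure_pmf.expectation X (indicator {Q. Q v > 0})
           \<le> measure_pmf.expectation Y (indicator {Q. Q v > 0} :: _ \<Rightarrow> real)"
    using assms(1) unfolding stoch_dom_def by blast
  then show ?thesis
    by simp
qed

theorem claim1:
  fixes V :: "'a set" and w :: "'a \<Rightarrow> 'a \<Rightarrow> real" and s :: 'a and Vs :: "'a set"
    and J :: "'a \<Rightarrow> real" and \<beta> :: real and Q0 Q0' :: "'a \<Rightarrow> nat"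
  assumes finV: "finite V"
    and sV: "s \<in> V"
    and w_sym: "\<And>u v. w u v = w v u"
    and w_nonneg: "\<And>u v. w u v \<ge> 0"
    and w_out: "\<And>u v. u \<notin> V \<or> v \<notin> V \<Longrightarrow> w u v = 0"
    and conn: "wgraph_connected V w"
    and Vs: "Vs \<subseteq> V - {s}"
    and J_src: "\<And>v. v \<in> Vs \<Longrightarrow> J v > 0"
    and J_other: "\<And>v. v \<in> V - {s} - Vs \<Longrightarrow> J v = 0"
    and J_sink: "J s = - (\<Sum>v\<in>V - {s}. J v)"
    and beta_pos: "\<beta> > 0"
    and beta_J: "\<And>v. v \<in> V - {s} \<Longrightarrow> \<beta> * J v \<le> 1"
    and Q0: "Q0 \<in> dc_states V s" and Q0': "Q0' \<in> dc_states V s"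
    and le0: "dc_le V s Q0 Q0'"
  shows "\<forall>t. stoch_dom V s (dc_dist V w s J \<beta> Q0 t) (dc_dist V w s J \<beta> Q0' t)
           \<and> (\<forall>v\<in>V - {s}. measure_pmf.prob (dc_dist V w s J \<beta> Q0 t) {Q. Q v > 0}
                          \<le> measure_pmf.prob (dc_dist V w s J \<beta> Q0' t) {Q. Q v > 0})"
proof (intro allI conjI ballI)
  fix t
  let ?C = "dc_coupled_dist V w s J \<beta> Q0 Q0' t"
  define B where "B = sum Q0 V + sum Q0' V"
  have "Q0 \<in> dc_bounded_states V s B" "Q0' \<in> dc_bounded_states V s B"
    using dc_states_bounded[OF finV] Q0 Q0' by (simp_all add: B_def)
  note support = dc_coupled_dist_support[OF finV this le0]
  have "set_pmf ?C \<subseteq> dc_bounded_states V s (B + t * (1 + card (V - {s})))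
                    \<times> dc_bounded_states V s (B + t * (1 + card (V - {s})))"
    using support by (auto simp: mem_Times_iff)
  then have "finite (set_pmf ?C)"
    by (rule finite_subset) (simp add: finite_dc_bounded_states[OF finV])
  from stoch_dom_if_monotone_coupling[OF this] support
  show dom: "stoch_dom V s (dc_dist V w s J \<beta> Q0 t) (dc_dist V w s J \<beta> Q0' t)"
    by (auto simp: dc_coupled_dist_marginals[OF finV] dc_bounded_states_def)
  fix v assume "v \<in> V - {s}"
  with dom show "measure_pmf.prob (dc_dist V w s J \<beta> Q0 t) {Q. Q v > 0}
               \<le> measure_pmf.prob (dc_dist V w s J \<beta> Q0' t) {Q. Q v > 0}"
    by (rule stoch_dom_prob_queue_nonempty)
qed

end
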